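(* Let $\rho=(\frac12,\ldots,\frac12)\in\mathbb{R}^8$ and let $P^{(1)}\subset\mathbb{R}^8$ be the convex hull of the vectors $e_i+e_j$ and $\rho-e_i-e_j$ ($0\le i<j\le7$). Then, inside the affine subspace $\{\alpha:\alpha\cdot\rho=1\}$, the bounding inequalities of $P^{(1)}$ are \[\alpha\cdot\delta\le1\quad(\delta\in R(E_7)),\qquad \alpha\cdot\mu\le2\quad(\mu\in\Lambda(E_8),\ \mu\cdot\rho=1,\ \mu\cdot\mu=4);\] that is, $P^{(1)}$ is the set of $\alpha$ with $\alpha\cdot\rho=1$ satisfying all these inequalities, and each is facet-defining.
   Context: $\Lambda(E_8)=\mathbb{Z}^8\cup(\mathbb{Z}^8+\rho)$ (the root lattice of $E_8$), $R(E_8)=\{v\in\Lambda(E_8):v\cdot v=2\}$, $R(E_7)=\{v\in R(E_8):v\cdot\rho=0\}$; $e_0,\ldots,e_7$ is the standard basis. *)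

theory Defs
  imports "HOL-Analysis.Analysis"
begin

text \<open>Vectors in R^8 are real^8; the standard basis vector e_i is axis i 1, indices i :: 8.\<close>

definition rho :: "real^8" where
  "rho = (\<chi> i. 1/2)"

definition Lambda_E8 :: "(real^8) set" where
  "Lambda_E8 = {v. (\<forall>i. v $ i \<in> \<int>) \<or> (\<forall>i. v $ i - 1/2 \<in> \<int>)}"

definition R_E8 :: "(real^8) set" where
  "R_E8 = {v \<in> Lambda_E8. v \<bullet> v = 2}"

definition R_E7 :: "(real^8) set" where
  "R_E7 = {v \<in> R_E8. v \<bullet> rho = 0}"

definition P1 :: "(real^8) set" where
  "P1 = convex hull
     ({axis i 1 + axis j 1 | i j :: 8. i < j} \<union> {rho - axis i 1 - axis j 1 | i j :: 8. i < j})"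

end

theory Submission
  imports Defs
begin

(* Every vertex v of P1 has v \<bullet> v = 2 and integral inner products with the roots \<delta> of E7 and with
   the norm-4 vectors \<mu> with \<mu> \<bullet> rho = 1, so Cauchy-Schwarz and integrality give v \<bullet> \<delta> \<le> 1
   (v \<noteq> \<delta> because v \<bullet> rho = 1 while \<delta> \<bullet> rho = 0) and v \<bullet> \<mu> \<le> 2.
   Conversely, sort the coordinates of a point \<alpha> satisfying the inequalities.  Six of the
   inequalities produce t \<in> [0, 1] such that \<alpha> = (1 - t) a + t (rho - b) with a and b in the
   hypersimplex {x \<in> [0,1]^8. \<Sum> x = 2}, whose vertices are the e_i + e_j.
   For the facets: coordinate permutations preserve P1, R(E7) and the norm-4 vectors split into two
   and four orbits, and for one representative of each orbit the face contains seven affinely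
   independent vertices. *)

lemma UNIV_8: "(UNIV :: 8 set) = {0, 1, 2, 3, 4, 5, 6, 7}"
  by (rule sym, rule card_subset_eq) simp_all

lemma cases_8:
  obtains "i = 0" | "i = 1" | "i = 2" | "i = 3" | "i = 4" | "i = 5" | "i = 6" | "i = (7::8)"
  using UNIV_8 by auto

lemma sum_UNIV_8: "sum f (UNIV :: 8 set) = f 0 + f 1 + f 2 + f 3 + f 4 + f 5 + f 6 + f 7"
  unfolding UNIV_8 by (simp add: add.assoc)

lemma all_8: "(\<forall>i::8. P i) \<longleftrightarrow> P 0 \<and> P 1 \<and> P 2 \<and> P 3 \<and> P 4 \<and> P 5 \<and> P 6 \<and> P 7"
proof
  assume "P 0 \<and> P 1 \<and> P 2 \<and> P 3 \<and> P 4 \<and> P 5 \<and> P 6 \<and> P 7"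
  then show "\<forall>i. P i"
    using UNIV_8 by (metis UNIV_I empty_iff insert_iff)
qed simp

lemma ex_8: "(\<exists>i::8. P i) \<longleftrightarrow> P 0 \<or> P 1 \<or> P 2 \<or> P 3 \<or> P 4 \<or> P 5 \<or> P 6 \<or> P 7"
  using all_8[of "\<lambda>i. \<not> P i"] by blast

lemma card_8: "card {i::8. P i} = of_bool (P 0) + of_bool (P 1) + of_bool (P 2) + of_bool (P 3)
    + of_bool (P 4) + of_bool (P 5) + of_bool (P 6) + of_bool (P 7)"
proof -
  have "card {i::8. P i} = (\<Sum>i\<in>UNIV. of_bool (P i))"
    by (simp add: sum.If_cases)
  then show ?thesis
    by (simp only: sum_UNIV_8)
qed

lemma rho_nth [simp]: "rho $ i = 1/2"
  by (simp add: rho_def)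

lemma inner_rho: "x \<bullet> rho = (\<Sum>i\<in>UNIV. x $ i) / 2"
  by (simp add: inner_vec_def sum_divide_distrib)

lemma inner_axis_left [simp]: "axis i 1 \<bullet> x = x $ i"
  by (simp add: inner_commute[of "axis i 1"] inner_axis)

lemma inner_axis_right [simp]: "x \<bullet> axis i 1 = x $ i"
  by (simp add: inner_axis)

lemma rho_inner_rho [simp]: "rho \<bullet> rho = 2"
  by (simp add: inner_rho)

lemma axis_one_nth [simp]: "axis j (1::real) $ i = (if i = j then 1 else 0)"
  by (simp add: axis_def)

lemma inner_self_vec: "v \<bullet> v = (\<Sum>i\<in>UNIV. v $ i * v $ i)"
  by (simp add: inner_vec_def)

section \<open>The vertices of P1 satisfy the inequalities\<close>

definition norm4_vectors :: "(real^8) set" where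
  "norm4_vectors = {\<mu> \<in> Lambda_E8. \<mu> \<bullet> rho = 1 \<and> \<mu> \<bullet> \<mu> = 4}"

definition P1_inequalities :: "(real^8) set" where
  "P1_inequalities = {\<alpha>. \<alpha> \<bullet> rho = 1 \<and> (\<forall>\<delta>\<in>R_E7. \<alpha> \<bullet> \<delta> \<le> 1) \<and> (\<forall>\<mu>\<in>norm4_vectors. \<alpha> \<bullet> \<mu> \<le> 2)}"

lemma P1_inequalitiesD:
  assumes "\<alpha> \<in> P1_inequalities"
  shows "\<alpha> \<bullet> rho = 1" and "\<delta> \<in> R_E7 \<Longrightarrow> \<alpha> \<bullet> \<delta> \<le> 1" and "\<mu> \<in> norm4_vectors \<Longrightarrow> \<alpha> \<bullet> \<mu> \<le> 2"
  using assms by (auto simp: P1_inequalities_def)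

definition pair_vectors :: "(real^8) set" where
  "pair_vectors = {axis i 1 + axis j 1 | i j. i \<noteq> j}"

definition P1_vertices :: "(real^8) set" where
  "P1_vertices = pair_vectors \<union> (\<lambda>x. rho - x) ` pair_vectors"

lemma P1_convex_hull_vertices: "P1 = convex hull P1_vertices"
proof -
  have pairs: "{axis i 1 + axis j 1 | i j :: 8. i < j} = pair_vectors"
  proof (intro antisym subsetI)
    fix x assume "x \<in> pair_vectors"
    then obtain i j where ij: "i \<noteq> j" "x = axis i 1 + axis j 1"
      by (auto simp: pair_vectors_def)
    show "x \<in> {axis i 1 + axis j 1 | i j :: 8. i < j}"
    proof (cases "i < j")
      case False
      with ij have "j < i" "x = axis j 1 + axis i 1"
        by (simp_all add: add.commute)
      then show ?thesis by blast
    qed (use ij in blast)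
  qed (auto simp: pair_vectors_def)
  have "{rho - axis i 1 - axis j 1 | i j :: 8. i < j} = (\<lambda>x. rho - x) ` {axis i 1 + axis j 1 | i j :: 8. i < j}"
    by (simp only: diff_diff_eq) blast
  with pairs show ?thesis
    by (simp add: P1_def P1_vertices_def)
qed

lemma convex_P1: "convex P1"
  by (simp add: P1_def)

lemma pair_vector_mem_P1: "i \<noteq> j \<Longrightarrow> axis i 1 + axis j 1 \<in> P1"
  unfolding P1_convex_hull_vertices P1_vertices_def pair_vectors_def by (rule hull_inc) blast

lemma rho_minus_pair_vector_mem_P1: "i \<noteq> j \<Longrightarrow> rho - axis i 1 - axis j 1 \<in> P1"
  unfolding P1_convex_hull_vertices P1_vertices_def pair_vectors_def diff_diff_eq
  by (rule hull_inc) blast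

lemma P1_vertices_cases:
  assumes "v \<in> P1_vertices"
  obtains i j where "i \<noteq> j" "v = axis i 1 + axis j 1"
    | i j where "i \<noteq> j" "v = rho - (axis i 1 + axis j 1)"
  using assms by (auto simp: P1_vertices_def pair_vectors_def)

lemma P1_vertices_inner_rho: "v \<in> P1_vertices \<Longrightarrow> v \<bullet> rho = 1"
  by (elim P1_vertices_cases) (simp_all add: inner_add_left inner_diff_left)

lemma P1_vertices_inner_self: "v \<in> P1_vertices \<Longrightarrow> v \<bullet> v = 2"
  by (elim P1_vertices_cases) (simp_all add: inner_add inner_diff)

lemma Ints_add_1_le_of_less: "z \<in> \<int> \<Longrightarrow> k \<in> \<int> \<Longrightarrow> (z::real) < k \<Longrightarrow> z + 1 \<le> k"
  by (elim Ints_cases) simp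

lemma inner_le_1_if_Ints:
  fixes x y :: "'a::real_inner"
  assumes "x \<bullet> y \<in> \<int>" and "x \<bullet> x = 2" and "y \<bullet> y = 2" and "x \<noteq> y"
  shows "x \<bullet> y \<le> 1"
proof -
  have "(x \<bullet> y)\<^sup>2 \<le> 2\<^sup>2"
    using Cauchy_Schwarz_ineq[of x y] assms(2,3) by simp
  then have "x \<bullet> y \<le> 2"
    by (rule power2_le_imp_le) simp
  moreover have "x \<bullet> y \<noteq> 2"
  proof
    assume "x \<bullet> y = 2"
    with assms(2,3) have "(x - y) \<bullet> (x - y) = 0"
      by (simp add: inner_diff inner_commute)
    with assms(4) show False
      by simp
  qed
  ultimately show ?thesis
    using Ints_add_1_le_of_less[OF assms(1), of 2] by simp
qed

lemma inner_le_2_if_Ints: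
  fixes x y :: "'a::real_inner"
  assumes "x \<bullet> y \<in> \<int>" and "x \<bullet> x = 2" and "y \<bullet> y = 4"
  shows "x \<bullet> y \<le> 2"
proof (rule ccontr)
  assume "\<not> x \<bullet> y \<le> 2"
  then have "3 \<le> x \<bullet> y"
    using Ints_add_1_le_of_less[of 2 "x \<bullet> y"] assms(1) by simp
  then have "3\<^sup>2 \<le> (x \<bullet> y)\<^sup>2"
    by (rule power_mono) simp
  moreover have "(x \<bullet> y)\<^sup>2 \<le> 8"
    using Cauchy_Schwarz_ineq[of x y] assms(2,3) by simp
  ultimately show False
    by simp
qed

lemma Lambda_E8_coord_add_Ints: "y \<in> Lambda_E8 \<Longrightarrow> y $ i + y $ j \<in> \<int>"
proof (unfold Lambda_E8_def, elim CollectE disjE)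
  assume "\<forall>i. y $ i - 1/2 \<in> \<int>"
  then have "(y $ i - 1/2) + (y $ j - 1/2) + 1 \<in> \<int>"
    by (intro Ints_add) auto
  then show ?thesis
    by simp
qed (auto intro: Ints_add)

lemma P1_vertices_inner_Ints:
  assumes "v \<in> P1_vertices" and "y \<in> Lambda_E8" and "y \<bullet> rho \<in> \<int>"
  shows "v \<bullet> y \<in> \<int>"
  using assms(1)
proof (cases rule: P1_vertices_cases)
  case (2 i j)
  have "y \<bullet> rho - (y $ i + y $ j) \<in> \<int>"
    using assms(2,3) Lambda_E8_coord_add_Ints by (intro Ints_diff)
  moreover have "rho \<bullet> y = y \<bullet> rho"
    by (rule inner_commute)
  ultimately show ?thesis
    using 2 by (simp add: inner_diff_left inner_add_left)
qed (use assms(2) Lambda_E8_coord_add_Ints in \<open>simp add: inner_add_left\<close>)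

lemma P1_vertices_subset_P1_inequalities: "P1_vertices \<subseteq> P1_inequalities"
proof
  fix v assume v: "v \<in> P1_vertices"
  have "v \<bullet> \<delta> \<le> 1" if "\<delta> \<in> R_E7" for \<delta>
  proof (rule inner_le_1_if_Ints)
    show "v \<bullet> \<delta> \<in> \<int>" "\<delta> \<bullet> \<delta> = 2"
      using that v by (auto simp: R_E7_def R_E8_def intro: P1_vertices_inner_Ints)
    show "v \<noteq> \<delta>"
      using that P1_vertices_inner_rho[OF v] by (auto simp: R_E7_def)
  qed (rule P1_vertices_inner_self[OF v])
  moreover have "v \<bullet> \<mu> \<le> 2" if "\<mu> \<in> norm4_vectors" for \<mu>
    using that v P1_vertices_inner_self[OF v]
    by (intro inner_le_2_if_Ints) (auto simp: norm4_vectors_def intro: P1_vertices_inner_Ints)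
  ultimately show "v \<in> P1_inequalities"
    using P1_vertices_inner_rho[OF v] by (simp add: P1_inequalities_def)
qed

lemma convex_P1_inequalities: "convex P1_inequalities"
proof -
  have eq: "P1_inequalities = {\<alpha>. rho \<bullet> \<alpha> = 1} \<inter> (\<Inter>\<delta>\<in>R_E7. {\<alpha>. \<delta> \<bullet> \<alpha> \<le> 1}) \<inter> (\<Inter>\<mu>\<in>norm4_vectors. {\<alpha>. \<mu> \<bullet> \<alpha> \<le> 2})"
    by (auto simp: P1_inequalities_def inner_commute)
  show ?thesis
    unfolding eq by (intro convex_Int convex_INT convex_hyperplane convex_halfspace_le)
qed

lemma P1_subset_P1_inequalities: "P1 \<subseteq> P1_inequalities"
  unfolding P1_convex_hull_vertices
  by (rule hull_minimal[of P1_vertices P1_inequalities convex,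
        OF P1_vertices_subset_P1_inequalities convex_P1_inequalities])

lemma P1_inner_R_E7_le: "x \<in> P1 \<Longrightarrow> \<delta> \<in> R_E7 \<Longrightarrow> x \<bullet> \<delta> \<le> 1"
  and P1_inner_norm4_le: "x \<in> P1 \<Longrightarrow> \<mu> \<in> norm4_vectors \<Longrightarrow> x \<bullet> \<mu> \<le> 2"
  using P1_subset_P1_inequalities P1_inequalitiesD by blast+

section \<open>The inequalities cut out P1\<close>

definition hypersimplex :: "nat \<Rightarrow> (real^'n) set" where
  "hypersimplex k = {x. (\<forall>i. 0 \<le> x $ i \<and> x $ i \<le> 1) \<and> (\<Sum>i\<in>UNIV. x $ i) = real k}"

lemma hypersimplex_eq_Int_cbox:
  "hypersimplex k = cbox 0 (\<chi> i. 1) \<inter> {x. (\<chi> i. 1) \<bullet> x = real k}"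
  by (auto simp: hypersimplex_def mem_box_cart inner_vec_def)

lemma compact_hypersimplex: "compact (hypersimplex k)"
  unfolding hypersimplex_eq_Int_cbox by (intro compact_Int_closed compact_cbox closed_hyperplane)

lemma convex_hypersimplex: "convex (hypersimplex k)"
  unfolding hypersimplex_eq_Int_cbox by (intro convex_Int convex_box convex_hyperplane)

lemma hypersimplex_fractional_coord_pair:
  fixes x :: "real^'n"
  assumes x: "x \<in> hypersimplex k" and xi: "0 < x $ i" "x $ i < 1"
  shows "\<exists>j. j \<noteq> i \<and> 0 < x $ j \<and> x $ j < 1"
proof (rule ccontr)
  assume "\<not> ?thesis"
  then have "x $ j \<in> \<int>" if "j \<noteq> i" for j
    using x that by (cases "x $ j = 0") (auto simp: hypersimplex_def order.order_iff_strict)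
  then have "(\<Sum>j\<in>UNIV - {i}. x $ j) \<in> \<int>"
    by (intro Ints_sum) blast
  moreover have "x $ i + (\<Sum>j\<in>UNIV - {i}. x $ j) = real k"
    using x by (simp add: hypersimplex_def sum.remove[symmetric])
  ultimately have "x $ i \<in> \<int>"
    by (metis Ints_diff Ints_of_nat add_diff_cancel_right')
  with xi show False
    using Ints_add_1_le_of_less[of 0 "x $ i"] by simp
qed

lemma extreme_point_of_hypersimplex_coord:
  fixes x :: "real^'n"
  assumes "x extreme_point_of hypersimplex k"
  shows "x $ i = 0 \<or> x $ i = 1"
proof (rule ccontr)
  assume "\<not> (x $ i = 0 \<or> x $ i = 1)"
  have x: "x \<in> hypersimplex k"
    using assms by (simp add: extreme_point_of_def)
  then have box: "0 \<le> x $ m \<and> x $ m \<le> 1" for m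
    by (simp add: hypersimplex_def)
  with \<open>\<not> (x $ i = 0 \<or> x $ i = 1)\<close> have xi: "0 < x $ i" "x $ i < 1"
    by (auto simp: order.order_iff_strict)
  then obtain j where j: "j \<noteq> i" "0 < x $ j" "x $ j < 1"
    using hypersimplex_fractional_coord_pair[OF x] by blast
  define e where "e = min (min (x $ i) (1 - x $ i)) (min (x $ j) (1 - x $ j))"
  have e: "0 < e" "e \<le> x $ i" "e \<le> 1 - x $ i" "e \<le> x $ j" "e \<le> 1 - x $ j"
    using xi j by (auto simp: e_def)
  define d :: "real^'n" where "d = e *\<^sub>R (axis i 1 - axis j 1)"
  have d: "d $ m = (if m = i then e else if m = j then - e else 0)" for m
    using j(1) by (auto simp: d_def)
  have "(\<chi> i. 1) \<bullet> d = 0"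
    by (simp add: d_def inner_diff_right)
  then have "x + d \<in> hypersimplex k" "x - d \<in> hypersimplex k"
    using x box e d by (auto simp: hypersimplex_eq_Int_cbox mem_box_cart inner_add_right inner_diff_right)
  moreover have "x - d \<noteq> x + d"
  proof
    assume "x - d = x + d"
    then have "(x - d) $ i = (x + d) $ i"
      by (rule arg_cong)
    with d[of i] e(1) show False
      by simp
  qed
  then have "x \<in> open_segment (x - d) (x + d)"
    using midpoint_in_open_segment[of "x - d" "x + d"] by (simp add: midpoint_def scaleR_add_right)
  ultimately show False
    using assms by (auto simp: extreme_point_of_def)
qed

lemma extreme_point_of_hypersimplex:
  assumes "x extreme_point_of hypersimplex k"
  shows "\<exists>A. card A = k \<and> x = (\<chi> i. of_bool (i \<in> A))"
proof (intro exI conjI)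
  let ?A = "{i. x $ i = 1}"
  show x: "x = (\<chi> i. of_bool (i \<in> ?A))"
    using extreme_point_of_hypersimplex_coord[OF assms] by (auto simp: vec_eq_iff)
  have "real (card ?A) = (\<Sum>i\<in>UNIV. x $ i)"
    by (subst x) (simp add: sum.If_cases)
  also have "\<dots> = real k"
    using assms by (simp add: extreme_point_of_def hypersimplex_def)
  finally show "card ?A = k"
    by simp
qed

lemma hypersimplex_subset_convex_hull:
  "hypersimplex k \<subseteq> convex hull {(\<chi> i. of_bool (i \<in> A)) | A. card A = k}"
proof -
  have "hypersimplex k = convex hull {x. x extreme_point_of hypersimplex k}"
    by (rule Krein_Milman_Minkowski[OF compact_hypersimplex convex_hypersimplex])
  also have "\<dots> \<subseteq> convex hull {(\<chi> i. of_bool (i \<in> A)) | A. card A = k}"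
    by (rule hull_mono) (auto dest: extreme_point_of_hypersimplex)
  finally show ?thesis .
qed

lemma hypersimplex_2_subset_convex_hull_pair_vectors: "hypersimplex 2 \<subseteq> convex hull pair_vectors"
proof -
  have "{(\<chi> i. of_bool (i \<in> A)) | A :: 8 set. card A = 2} \<subseteq> pair_vectors"
  proof clarify
    fix A :: "8 set" assume "card A = 2"
    then obtain p q where "A = {p, q}" "p \<noteq> q"
      by (auto simp: card_2_iff)
    then show "(\<chi> i. of_bool (i \<in> A)) \<in> pair_vectors"
      unfolding pair_vectors_def by (auto simp: vec_eq_iff)
  qed
  then show ?thesis
    using hypersimplex_subset_convex_hull[of 2] hull_mono by blast
qed

lemma hypersimplex_2_subset_P1: "hypersimplex 2 \<subseteq> P1"
  using hypersimplex_2_subset_convex_hull_pair_vectors hull_mono[of pair_vectors P1_vertices]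
  unfolding P1_convex_hull_vertices P1_vertices_def by blast

lemma rho_minus_hypersimplex_2_subset_P1: "b \<in> hypersimplex 2 \<Longrightarrow> rho - b \<in> P1"
proof -
  assume "b \<in> hypersimplex 2"
  then have "rho + (-1) *\<^sub>R b \<in> (\<lambda>x. rho + (-1) *\<^sub>R x) ` (convex hull pair_vectors)"
    using hypersimplex_2_subset_convex_hull_pair_vectors by blast
  also have "\<dots> = convex hull ((\<lambda>x. rho + (-1) *\<^sub>R x) ` pair_vectors)"
    by (rule convex_hull_affinity[symmetric])
  also have "\<dots> \<subseteq> P1"
    unfolding P1_convex_hull_vertices P1_vertices_def by (rule hull_mono) auto
  finally show ?thesis
    by simp
qed

lemma hypersimplex_combination_mem_P1:
  assumes "0 \<le> t" "t \<le> 1" "a \<in> hypersimplex 2" "b \<in> hypersimplex 2"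
  shows "(1 - t) *\<^sub>R a + t *\<^sub>R (rho - b) \<in> P1"
  using convexD[OF convex_P1 subsetD[OF hypersimplex_2_subset_P1 assms(3)]
      rho_minus_hypersimplex_2_subset_P1[OF assms(4)]] assms(1,2)
  by simp

lemma ex_between_with_sum:
  fixes l u :: "'n::finite \<Rightarrow> real"
  assumes "\<And>i. l i \<le> u i" and "sum l UNIV \<le> S" and "S \<le> sum u UNIV"
  obtains x where "\<And>i. l i \<le> x i" "\<And>i. x i \<le> u i" "sum x UNIV = S"
proof -
  define \<theta> where "\<theta> = (if sum u UNIV = sum l UNIV then 0 else (S - sum l UNIV) / (sum u UNIV - sum l UNIV))"
  have \<theta>: "0 \<le> \<theta>" "\<theta> \<le> 1" "sum l UNIV + \<theta> * (sum u UNIV - sum l UNIV) = S"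
    using assms(2,3) by (auto simp: \<theta>_def divide_le_eq_1)
  define x where "x i = l i + \<theta> * (u i - l i)" for i
  show ?thesis
  proof
    show "l i \<le> x i" for i
      using assms(1)[of i] \<theta> by (simp add: x_def)
    show "x i \<le> u i" for i
      using mult_right_mono[OF \<theta>(2), of "u i - l i"] assms(1)[of i] by (simp add: x_def)
    show "sum x UNIV = S"
      using \<theta>(3) by (simp add: x_def sum.distrib sum_distrib_left sum_subtractf algebra_simps)
  qed
qed

lemma scaled_hypersimplex_2:
  fixes x :: "real^8"
  assumes "0 \<le> s" and "\<And>i. 0 \<le> x $ i \<and> x $ i \<le> s" and "(\<Sum>i\<in>UNIV. x $ i) = 2 * s"
  obtains a where "a \<in> hypersimplex 2" "x = s *\<^sub>R a"
proof (cases "s = 0")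
  case True
  have "(axis 0 1 + axis 1 1 :: real^8) \<in> hypersimplex 2"
    by (simp add: hypersimplex_def sum.distrib)
  moreover have "x = 0"
    using assms(2) True by (auto simp: vec_eq_iff intro: antisym)
  ultimately show ?thesis
    using that True by simp
next
  case False
  with assms have "(1 / s) *\<^sub>R x \<in> hypersimplex 2"
    by (simp add: hypersimplex_def sum_divide_distrib[symmetric])
  with False show ?thesis
    using that[of "(1 / s) *\<^sub>R x"] by simp
qed

lemma mem_P1_if_split_bounds:
  fixes \<alpha> :: "real^8"
  assumes "\<alpha> \<bullet> rho = 1" and "0 \<le> t" and "t \<le> 1"
    and "\<And>i. - t/2 \<le> \<alpha> $ i" and "\<And>i. \<alpha> $ i \<le> 1 - t/2"
    and "(\<Sum>i\<in>UNIV. max 0 (\<alpha> $ i - t/2)) \<le> 2 - 2 * t"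
    and "2 - 2 * t \<le> (\<Sum>i\<in>UNIV. min (1 - t) (\<alpha> $ i + t/2))"
  shows "\<alpha> \<in> P1"
proof -
  obtain x where x: "\<And>i. max 0 (\<alpha> $ i - t/2) \<le> x i" "\<And>i. x i \<le> min (1 - t) (\<alpha> $ i + t/2)"
    and sum_x: "sum x UNIV = 2 - 2 * t"
  proof (rule ex_between_with_sum)
    show "max 0 (\<alpha> $ i - t/2) \<le> min (1 - t) (\<alpha> $ i + t/2)" for i
      using assms(2,3) assms(4,5)[of i] by auto
  qed (use assms(6,7) in auto)
  define y where "y i = x i - \<alpha> $ i + t/2" for i
  have "(\<Sum>i\<in>UNIV. \<alpha> $ i) = 2"
    using assms(1) by (simp add: inner_rho)
  then have sum_y: "sum y UNIV = 2 * t"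
    using sum_x by (simp add: y_def sum.distrib sum_subtractf)
  have y: "0 \<le> y i \<and> y i \<le> t" for i
    using x(1,2)[of i] by (simp add: y_def)
  obtain a where a: "a \<in> hypersimplex 2" "(\<chi> i. x i) = (1 - t) *\<^sub>R a"
    by (rule scaled_hypersimplex_2[of "1 - t" "\<chi> i. x i"]) (use assms(3) x sum_x in auto)
  obtain b where b: "b \<in> hypersimplex 2" "(\<chi> i. y i) = t *\<^sub>R b"
    by (rule scaled_hypersimplex_2[of t "\<chi> i. y i"]) (use assms(2) y sum_y in auto)
  have xa: "x i = (1 - t) * a $ i" and yb: "y i = t * b $ i" for i
    using arg_cong[OF a(2), of "\<lambda>v. v $ i"] arg_cong[OF b(2), of "\<lambda>v. v $ i"] by simp_all
  have "\<alpha> $ i = x i - y i + t/2" for i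
    by (simp add: y_def)
  then have "\<alpha> = (1 - t) *\<^sub>R a + t *\<^sub>R (rho - b)"
    by (simp add: vec_eq_iff xa yb algebra_simps)
  with assms(2,3) a(1) b(1) show ?thesis
    by (simp add: hypersimplex_combination_mem_P1)
qed

lemma sum_list_max_0_le_if_prefix_sums_le:
  fixes xs :: "real list"
  assumes "sorted_wrt (\<ge>) xs" and "\<And>k. k \<le> length xs \<Longrightarrow> sum_list (take k xs) \<le> B"
  shows "sum_list (map (max 0) xs) \<le> B"
  using assms
proof (induction xs arbitrary: B)
  case (Cons x xs)
  show ?case
  proof (cases "0 < x")
    case True
    have "sum_list (map (max 0) xs) \<le> B - x"
      using Cons.prems Cons.IH[of "B - x"] Cons.prems(2)[of "Suc k" for k] by fastforce
    with True show ?thesis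
      by simp
  next
    case False
    with Cons.prems(1) have "\<forall>y \<in> set (map (max 0) (x # xs)). y = 0"
      by (auto simp: max_def)
    then have "sum_list (map (max 0) (x # xs)) = 0"
      by (subst sum_list_nonneg_eq_0_iff) auto
    with Cons.prems(2)[of 0] show ?thesis
      by simp
  qed
qed simp

(* Since min (1 - t) (a + t/2) = a + t/2 - max 0 (a + 3t/2 - 1), both sums of
   mem_P1_if_split_bounds are sums of positive parts of a decreasing sequence. *)
lemma mem_P1_if_prefix_bounds:
  fixes \<alpha> :: "real^8"
  assumes rho: "\<alpha> \<bullet> rho = 1" and t: "0 \<le> t" "t \<le> 1"
    and xs: "distinct xs" "set xs = UNIV" "sorted_wrt (\<lambda>i j. \<alpha> $ j \<le> \<alpha> $ i) xs"
    and bounds: "\<And>i. - t/2 \<le> \<alpha> $ i" "\<And>i. \<alpha> $ i \<le> 1 - t/2"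
    and low: "\<And>k. k \<le> length xs \<Longrightarrow> sum_list (take k (map (\<lambda>i. \<alpha> $ i - t/2) xs)) \<le> 2 - 2 * t"
    and up: "\<And>k. k \<le> length xs \<Longrightarrow> sum_list (take k (map (\<lambda>i. \<alpha> $ i + 3 * t/2 - 1) xs)) \<le> 6 * t"
  shows "\<alpha> \<in> P1"
proof (rule mem_P1_if_split_bounds[OF rho t bounds])
  have sum_UNIV: "(\<Sum>i\<in>UNIV. g i) = sum_list (map g xs)" for g :: "8 \<Rightarrow> real"
    using sum.distinct_set_conv_list[OF xs(1), of g] xs(2) by simp
  have sorted_low: "sorted_wrt (\<ge>) (map (\<lambda>i. \<alpha> $ i - t/2) xs)"
    and sorted_up: "sorted_wrt (\<ge>) (map (\<lambda>i. \<alpha> $ i + 3 * t/2 - 1) xs)"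
    using xs(3) by (simp_all add: sorted_wrt_map)
  have "sum_list (map (max 0) (map (\<lambda>i. \<alpha> $ i - t/2) xs)) \<le> 2 - 2 * t"
    using sorted_low by (rule sum_list_max_0_le_if_prefix_sums_le) (simp add: low)
  moreover have "sum_list (map (max 0) (map (\<lambda>i. \<alpha> $ i + 3 * t/2 - 1) xs)) \<le> 6 * t"
    using sorted_up by (rule sum_list_max_0_le_if_prefix_sums_le) (simp add: up)
  ultimately have "(\<Sum>i\<in>UNIV. max 0 (\<alpha> $ i - t/2)) \<le> 2 - 2 * t"
    and "(\<Sum>i\<in>UNIV. max 0 (\<alpha> $ i + 3 * t/2 - 1)) \<le> 6 * t"
    by (simp_all add: sum_UNIV comp_def)
  moreover have "min (1 - t) (a + t/2) = (a + t/2) - max 0 (a + 3 * t/2 - 1)" for a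
    by (simp add: min_def max_def)
  ultimately show "(\<Sum>i\<in>UNIV. max 0 (\<alpha> $ i - t/2)) \<le> 2 - 2 * t"
    and "2 - 2 * t \<le> (\<Sum>i\<in>UNIV. min (1 - t) (\<alpha> $ i + t/2))"
    using rho by (simp_all add: sum_subtractf sum.distrib inner_rho)
qed

lemma nat_le_8_cases:
  assumes "k \<le> (8::nat)"
  obtains "k = 0" | "k = 1" | "k = 2" | "k = 3" | "k = 4" | "k = 5" | "k = 6" | "k = 7" | "k = 8"
proof -
  have "k = 0 \<or> k = 1 \<or> k = 2 \<or> k = 3 \<or> k = 4 \<or> k = 5 \<or> k = 6 \<or> k = 7 \<or> k = 8"
    using assms by arith
  with that show ?thesis
    by blast
qed

(* t is the least value allowed by the prefix sums of lengths 5, 6, 7 and by a7; the hypotheses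
   are the inequalities of P1 for six particular \<delta> and \<mu>. *)
lemma split_parameter_exists:
  fixes a0 a1 a2 a3 a4 a5 a6 a7 :: real
  assumes sorted: "a1 \<le> a0" "a2 \<le> a1" "a3 \<le> a2" "a4 \<le> a3" "a5 \<le> a4" "a6 \<le> a5" "a7 \<le> a6"
    and total: "a0 + a1 + a2 + a3 + a4 + a5 + a6 + a7 = 2"
    and ineqs: "a0 - a7 \<le> 1" "a0 + a1 + a2 + a3 \<le> 2" "a0 \<le> 1" "- 1/2 \<le> a7"
      "a0 + a1 + a2 - a7 \<le> 2" "2 * a0 + a1 + a2 + a3 + a4 \<le> 3"
  obtains t where "0 \<le> t" "t \<le> 1" "- t/2 \<le> a7" "a0 \<le> 1 - t/2"
    "\<And>k. k \<le> 8 \<Longrightarrow> sum_list (take k (map (\<lambda>a. a - t/2) [a0, a1, a2, a3, a4, a5, a6, a7])) \<le> 2 - 2 * t"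
    "\<And>k. k \<le> 8 \<Longrightarrow> sum_list (take k (map (\<lambda>a. a + 3 * t/2 - 1) [a0, a1, a2, a3, a4, a5, a6, a7])) \<le> 6 * t"
proof
  define t where "t = max (max (max (max 0 (- 2 * a7)) (2 * a0 + 2 * a1 + 2 * a2 + 2 * a3 + 2 * a4 - 4))
    (a0 + a1 + a2 + a3 + a4 + a5 - 2)) (2/3 * a0 + 2/3 * a1 + 2/3 * a2 + 2/3 * a3 + 2/3 * a4 + 2/3 * a5 + 2/3 * a6 - 4/3)"
  have lower: "0 \<le> t" "- 2 * a7 \<le> t" "2 * a0 + 2 * a1 + 2 * a2 + 2 * a3 + 2 * a4 - 4 \<le> t"
    "a0 + a1 + a2 + a3 + a4 + a5 - 2 \<le> t"
    "2/3 * a0 + 2/3 * a1 + 2/3 * a2 + 2/3 * a3 + 2/3 * a4 + 2/3 * a5 + 2/3 * a6 - 4/3 \<le> t"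
    unfolding t_def by auto
  have upper: "t \<le> 1" "t \<le> 2 - 2 * a0" "t \<le> 4/3 - 2/3 * a0" "t \<le> 2 - a0 - a1"
    "t \<le> 4 - 2 * a0 - 2 * a1 - 2 * a2"
    unfolding t_def max.bounded_iff using assms by (intro conjI; (simp | smt (z3)))+
  have prefix_low: "0 \<le> 2 - 2 * t" "a0 \<le> 2 - 3/2 * t" "a0 + a1 \<le> 2 - t" "a0 + a1 + a2 \<le> 2 - t/2"
    "a0 + a1 + a2 + a3 \<le> 2" "a0 + a1 + a2 + a3 + a4 \<le> 2 + t/2" "a0 + a1 + a2 + a3 + a4 + a5 \<le> 2 + t"
    "a0 + a1 + a2 + a3 + a4 + a5 + a6 \<le> 2 + 3/2 * t" "a0 + a1 + a2 + a3 + a4 + a5 + a6 + a7 \<le> 2 + 2 * t"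
    using lower upper ineqs(2) total by linarith+
  have prefix_up: "0 \<le> 6 * t" "a0 \<le> 1 + 9/2 * t" "a0 + a1 \<le> 2 + 3 * t" "a0 + a1 + a2 \<le> 3 + 3/2 * t"
    "a0 + a1 + a2 + a3 \<le> 4" "a0 + a1 + a2 + a3 + a4 \<le> 5 - 3/2 * t" "a0 + a1 + a2 + a3 + a4 + a5 \<le> 6 - 3 * t"
    "a0 + a1 + a2 + a3 + a4 + a5 + a6 \<le> 7 - 9/2 * t" "a0 + a1 + a2 + a3 + a4 + a5 + a6 + a7 \<le> 8 - 6 * t"
    using lower upper ineqs(3,4) sorted total by linarith+
  show "0 \<le> t" "t \<le> 1" "- t/2 \<le> a7" "a0 \<le> 1 - t/2"
    using lower upper by linarith+
  show "sum_list (take k (map (\<lambda>a. a - t/2) [a0, a1, a2, a3, a4, a5, a6, a7])) \<le> 2 - 2 * t"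
    if "k \<le> 8" for k
    using that prefix_low by (cases rule: nat_le_8_cases; simp; linarith)
  show "sum_list (take k (map (\<lambda>a. a + 3 * t/2 - 1) [a0, a1, a2, a3, a4, a5, a6, a7])) \<le> 6 * t"
    if "k \<le> 8" for k
    using that prefix_up by (cases rule: nat_le_8_cases; simp; linarith)
qed

lemma obtain_decreasing_enumeration:
  fixes f :: "'a::finite \<Rightarrow> real"
  obtains xs where "distinct xs" "set xs = UNIV" "sorted_wrt (\<lambda>i j. f j \<le> f i) xs"
proof -
  obtain ys :: "'a list" where ys: "set ys = UNIV" "distinct ys"
    using finite_distinct_list[of "UNIV :: 'a set"] by auto
  have "sorted (map (\<lambda>i. - f i) (sort_key (\<lambda>i. - f i) ys))"
    by (rule sorted_sort_key)
  then have "sorted_wrt (\<lambda>i j. f j \<le> f i) (sort_key (\<lambda>i. - f i) ys)"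
    by (simp add: sorted_map)
  with ys show ?thesis
    by (intro that[of "sort_key (\<lambda>i. - f i) ys"]) simp_all
qed

lemma Lambda_E8_if_Ints: "(\<forall>k. v $ k \<in> \<int>) \<Longrightarrow> v \<in> Lambda_E8"
  and Lambda_E8_if_half_Ints: "(\<forall>k. v $ k - 1/2 \<in> \<int>) \<Longrightarrow> v \<in> Lambda_E8"
  by (simp_all add: Lambda_E8_def)

lemma axis_diff_mem_R_E7: "i \<noteq> j \<Longrightarrow> axis i 1 - axis j 1 \<in> R_E7"
  by (auto simp: R_E7_def R_E8_def inner_diff intro!: Lambda_E8_if_Ints)

lemma four_axes_minus_rho_mem_R_E7:
  "distinct [i, j, k, l] \<Longrightarrow> axis i 1 + axis j 1 + axis k 1 + axis l 1 - rho \<in> R_E7"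
  by (auto simp: R_E7_def R_E8_def inner_diff inner_add intro!: Lambda_E8_if_half_Ints)

lemma two_axis_mem_norm4_vectors: "2 *\<^sub>R axis i 1 \<in> norm4_vectors"
  by (auto simp: norm4_vectors_def intro!: Lambda_E8_if_Ints)

lemma rho_minus_two_axis_mem_norm4_vectors: "rho - 2 *\<^sub>R axis i 1 \<in> norm4_vectors"
  by (auto simp: norm4_vectors_def inner_diff intro!: Lambda_E8_if_half_Ints)

lemma three_axes_minus_axis_mem_norm4_vectors:
  "distinct [i, j, k, l] \<Longrightarrow> axis i 1 + axis j 1 + axis k 1 - axis l 1 \<in> norm4_vectors"
  by (auto simp: norm4_vectors_def inner_diff inner_add intro!: Lambda_E8_if_Ints)

lemma rho_plus_axis_minus_three_axes_mem_norm4_vectors: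
  "distinct [i, j, k, l] \<Longrightarrow> rho + axis i 1 - axis j 1 - axis k 1 - axis l 1 \<in> norm4_vectors"
  by (auto simp: norm4_vectors_def inner_diff inner_add intro!: Lambda_E8_if_half_Ints)

lemma P1_inequalities_coord_bounds:
  assumes "\<alpha> \<in> P1_inequalities"
  shows "\<alpha> $ i \<le> 1" and "- 1/2 \<le> \<alpha> $ i"
proof -
  have "\<alpha> \<bullet> (2 *\<^sub>R axis i 1) \<le> 2" "\<alpha> \<bullet> (rho - 2 *\<^sub>R axis i 1) \<le> 2"
    using P1_inequalitiesD(3)[OF assms] two_axis_mem_norm4_vectors rho_minus_two_axis_mem_norm4_vectors
    by blast+
  with P1_inequalitiesD(1)[OF assms] show "\<alpha> $ i \<le> 1" "- 1/2 \<le> \<alpha> $ i"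
    by (simp_all add: inner_diff_right)
qed

lemma P1_inequalities_coord_diff_le:
  assumes "\<alpha> \<in> P1_inequalities" and "i \<noteq> j"
  shows "\<alpha> $ i - \<alpha> $ j \<le> 1"
  using P1_inequalitiesD(2)[OF assms(1) axis_diff_mem_R_E7[OF assms(2)]] by (simp add: inner_diff_right)

lemma P1_inequalities_four_coords_le:
  assumes "\<alpha> \<in> P1_inequalities" and "distinct [i, j, k, l]"
  shows "\<alpha> $ i + \<alpha> $ j + \<alpha> $ k + \<alpha> $ l \<le> 2"
    and "\<alpha> $ i + \<alpha> $ j + \<alpha> $ k - \<alpha> $ l \<le> 2"
    and "\<alpha> $ i - \<alpha> $ j - \<alpha> $ k - \<alpha> $ l \<le> 1"
  using P1_inequalitiesD(2)[OF assms(1) four_axes_minus_rho_mem_R_E7[OF assms(2)]]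
    P1_inequalitiesD(3)[OF assms(1) three_axes_minus_axis_mem_norm4_vectors[OF assms(2)]]
    P1_inequalitiesD(3)[OF assms(1) rho_plus_axis_minus_three_axes_mem_norm4_vectors[OF assms(2)]]
    P1_inequalitiesD(1)[OF assms(1)]
  by (simp_all add: inner_diff_right inner_add_right)

lemma P1_inequalities_subset_P1: "P1_inequalities \<subseteq> P1"
proof
  fix \<alpha> assume \<alpha>: "\<alpha> \<in> P1_inequalities"
  obtain xs where xs: "distinct xs" "set xs = UNIV" "sorted_wrt (\<lambda>i j. \<alpha> $ j \<le> \<alpha> $ i) xs"
    by (rule obtain_decreasing_enumeration)
  then have "length xs = 8"
    using distinct_card[of xs] by simp
  then obtain p0 p1 p2 p3 p4 p5 p6 p7 where p: "xs = [p0, p1, p2, p3, p4, p5, p6, p7]"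
    by (auto simp: length_Suc_conv numeral_eq_Suc)
  have distinct: "distinct [p0, p1, p2, p3, p4, p5, p6, p7]"
    and sorted: "sorted_wrt (\<lambda>i j. \<alpha> $ j \<le> \<alpha> $ i) [p0, p1, p2, p3, p4, p5, p6, p7]"
    using xs p by simp_all
  then have sorted_coords: "\<alpha> $ p1 \<le> \<alpha> $ p0" "\<alpha> $ p2 \<le> \<alpha> $ p1" "\<alpha> $ p3 \<le> \<alpha> $ p2" "\<alpha> $ p4 \<le> \<alpha> $ p3"
    "\<alpha> $ p5 \<le> \<alpha> $ p4" "\<alpha> $ p6 \<le> \<alpha> $ p5" "\<alpha> $ p7 \<le> \<alpha> $ p6"
    by simp_all
  have total: "\<alpha> $ p0 + \<alpha> $ p1 + \<alpha> $ p2 + \<alpha> $ p3 + \<alpha> $ p4 + \<alpha> $ p5 + \<alpha> $ p6 + \<alpha> $ p7 = 2"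
    using P1_inequalitiesD(1)[OF \<alpha>] sum.distinct_set_conv_list[OF xs(1), of "\<lambda>i. \<alpha> $ i"] xs(2) p
    by (simp add: inner_rho add.assoc)
  have H1: "\<alpha> $ p0 - \<alpha> $ p7 \<le> 1"
    by (rule P1_inequalities_coord_diff_le[OF \<alpha>]) (use distinct in simp)
  have H2: "\<alpha> $ p0 + \<alpha> $ p1 + \<alpha> $ p2 + \<alpha> $ p3 \<le> 2"
    and H5: "\<alpha> $ p0 + \<alpha> $ p1 + \<alpha> $ p2 - \<alpha> $ p7 \<le> 2"
    and "\<alpha> $ p0 - \<alpha> $ p5 - \<alpha> $ p6 - \<alpha> $ p7 \<le> 1"
    by (rule P1_inequalities_four_coords_le[OF \<alpha>]; use distinct in simp)+
  with total have H6: "2 * \<alpha> $ p0 + \<alpha> $ p1 + \<alpha> $ p2 + \<alpha> $ p3 + \<alpha> $ p4 \<le> 3"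
    by linarith
  obtain t where t: "0 \<le> t" "t \<le> 1" "- t/2 \<le> \<alpha> $ p7" "\<alpha> $ p0 \<le> 1 - t/2"
    and low: "\<And>k. k \<le> 8 \<Longrightarrow> sum_list (take k (map (\<lambda>a. a - t/2)
      [\<alpha> $ p0, \<alpha> $ p1, \<alpha> $ p2, \<alpha> $ p3, \<alpha> $ p4, \<alpha> $ p5, \<alpha> $ p6, \<alpha> $ p7])) \<le> 2 - 2 * t"
    and up: "\<And>k. k \<le> 8 \<Longrightarrow> sum_list (take k (map (\<lambda>a. a + 3 * t/2 - 1)
      [\<alpha> $ p0, \<alpha> $ p1, \<alpha> $ p2, \<alpha> $ p3, \<alpha> $ p4, \<alpha> $ p5, \<alpha> $ p6, \<alpha> $ p7])) \<le> 6 * t"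
    using split_parameter_exists[OF sorted_coords total H1 H2 P1_inequalities_coord_bounds[OF \<alpha>] H5 H6]
    by metis
  have "\<alpha> $ p7 \<le> \<alpha> $ i \<and> \<alpha> $ i \<le> \<alpha> $ p0" for i
    using sorted xs(2) p by auto
  with t(3,4) have "- t/2 \<le> \<alpha> $ i" "\<alpha> $ i \<le> 1 - t/2" for i
    by (meson order.trans)+
  with low up show "\<alpha> \<in> P1"
    by (intro mem_P1_if_prefix_bounds[OF P1_inequalitiesD(1)[OF \<alpha>] t(1,2) xs]) (auto simp: p)
qed

section \<open>Coordinate permutations\<close>

definition permute_coords :: "('n \<Rightarrow> 'n) \<Rightarrow> 'a^'n \<Rightarrow> 'a^'n" where
  "permute_coords \<sigma> x = (\<chi> i. x $ \<sigma> i)"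

lemma permute_coords_nth [simp]: "permute_coords \<sigma> x $ i = x $ \<sigma> i"
  by (simp add: permute_coords_def)

lemma permute_coords_add: "permute_coords \<sigma> (x + y) = permute_coords \<sigma> x + permute_coords \<sigma> y"
  and permute_coords_diff: "permute_coords \<sigma> (x - y) = permute_coords \<sigma> x - permute_coords \<sigma> y"
  and permute_coords_scaleR: "permute_coords \<sigma> (c *\<^sub>R z) = c *\<^sub>R permute_coords \<sigma> z"
  by (simp_all add: vec_eq_iff)

lemma linear_permute_coords: "linear (permute_coords \<sigma> :: real^'n \<Rightarrow> real^'n)"
  by (rule linearI) (simp_all add: permute_coords_add permute_coords_scaleR)

lemma permute_coords_comp_inv:
  "bij \<sigma> \<Longrightarrow> permute_coords \<sigma> (permute_coords (inv \<sigma>) x) = x"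
  by (simp add: vec_eq_iff bij_is_inj)

lemma inj_permute_coords: "bij \<sigma> \<Longrightarrow> inj (permute_coords \<sigma>)"
  by (rule injI) (simp add: vec_eq_iff, metis bij_pointE)

lemma inner_permute_coords:
  fixes x y :: "real^'n"
  assumes "bij \<sigma>"
  shows "permute_coords \<sigma> x \<bullet> permute_coords \<sigma> y = x \<bullet> y"
  using sum.reindex_bij_betw[of \<sigma> UNIV UNIV "\<lambda>i. x $ i * y $ i"] assms
  by (simp add: inner_vec_def bij_betw_def bij_def)

lemma permute_coords_axis:
  "bij \<sigma> \<Longrightarrow> permute_coords \<sigma> (axis i 1) = axis (inv \<sigma> i) (1::real)"
  by (auto simp: vec_eq_iff bij_inv_eq_iff)

lemma permute_coords_rho [simp]: "permute_coords \<sigma> rho = rho"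
  by (simp add: vec_eq_iff)

lemma permute_coords_pair_vectors:
  assumes "bij \<sigma>"
  shows "permute_coords \<sigma> ` pair_vectors \<subseteq> pair_vectors"
proof
  fix x assume "x \<in> permute_coords \<sigma> ` pair_vectors"
  then obtain i j where "i \<noteq> j" "x = permute_coords \<sigma> (axis i 1 + axis j 1)"
    by (auto simp: pair_vectors_def)
  moreover from this(1) have "inv \<sigma> i \<noteq> inv \<sigma> j"
    by (metis assms bij_inv_eq_iff)
  ultimately show "x \<in> pair_vectors"
    unfolding pair_vectors_def by (auto simp: permute_coords_add permute_coords_axis[OF assms])
qed

lemma permute_coords_P1_vertices:
  "bij \<sigma> \<Longrightarrow> permute_coords \<sigma> ` P1_vertices \<subseteq> P1_vertices"
  using permute_coords_pair_vectors[of \<sigma>]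
  by (fastforce simp: P1_vertices_def permute_coords_diff)

lemma permute_coords_P1:
  assumes "bij \<sigma>"
  shows "permute_coords \<sigma> ` P1 = P1"
proof -
  have sub: "permute_coords \<tau> ` P1 \<subseteq> P1" if "bij \<tau>" for \<tau> :: "8 \<Rightarrow> 8"
    unfolding P1_convex_hull_vertices convex_hull_linear_image[OF linear_permute_coords]
    by (rule hull_mono[OF permute_coords_P1_vertices[OF that]])
  have "x \<in> permute_coords \<sigma> ` P1" if "x \<in> P1" for x
  proof -
    have "permute_coords (inv \<sigma>) x \<in> P1"
      using sub[OF bij_imp_bij_inv[OF assms]] that by (rule subsetD[OF _ imageI])
    then show ?thesis
      by (metis imageI permute_coords_comp_inv[OF assms])
  qed
  with sub[OF assms] show ?thesis
    by blast
qed

lemma facet_of_P1_permute_coords: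
  assumes "bij \<sigma>" and "{\<alpha> \<in> P1. \<alpha> \<bullet> c = r} facet_of P1"
  shows "{\<alpha> \<in> P1. \<alpha> \<bullet> permute_coords \<sigma> c = r} facet_of P1"
proof -
  have lin: "linear (permute_coords \<sigma> :: real^8 \<Rightarrow> real^8)" and inj: "inj (permute_coords \<sigma>)"
    using linear_permute_coords inj_permute_coords[OF assms(1)] by auto
  have "permute_coords \<sigma> ` {\<alpha> \<in> P1. \<alpha> \<bullet> c = r} facet_of permute_coords \<sigma> ` P1"
    using assms(2) unfolding facet_of_def
    by (simp add: face_of_linear_image[OF lin inj] aff_dim_injective_linear_image[OF lin inj])
  moreover have "permute_coords \<sigma> ` {\<alpha> \<in> P1. \<alpha> \<bullet> c = r} = {\<alpha> \<in> P1. \<alpha> \<bullet> permute_coords \<sigma> c = r}"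
  proof (intro antisym subsetI)
    fix \<alpha> assume \<alpha>: "\<alpha> \<in> {\<alpha> \<in> P1. \<alpha> \<bullet> permute_coords \<sigma> c = r}"
    then obtain \<beta> where "\<beta> \<in> P1" "\<alpha> = permute_coords \<sigma> \<beta>"
      using permute_coords_P1[OF assms(1)] by blast
    with \<alpha> show "\<alpha> \<in> permute_coords \<sigma> ` {\<alpha> \<in> P1. \<alpha> \<bullet> c = r}"
      by (simp add: inner_permute_coords[OF assms(1)])
  qed (use permute_coords_P1[OF assms(1)] inner_permute_coords[OF assms(1)] in auto)
  ultimately show ?thesis
    using permute_coords_P1[OF assms(1)] by simp
qed

section \<open>The orbits of R(E7) and of the norm-4 vectors\<close>

lemma sum_by_values:
  fixes f :: "'n::finite \<Rightarrow> 'a" and h :: "'a \<Rightarrow> real"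
  assumes "finite W" "\<And>i. f i \<in> W"
  shows "(\<Sum>i\<in>UNIV. h (f i)) = (\<Sum>w\<in>W. real (card {i. f i = w}) * h w)"
proof -
  have "(\<Sum>i\<in>UNIV. h (f i)) = (\<Sum>w\<in>W. \<Sum>i\<in>{i \<in> UNIV. f i = w}. h (f i))"
    by (rule sum.group[symmetric]) (use assms in auto)
  also have "\<dots> = (\<Sum>w\<in>W. real (card {i. f i = w}) * h w)"
    by (intro sum.cong refl) simp
  finally show ?thesis .
qed

lemma value_count_moments:
  fixes v :: "real^'n"
  assumes "finite W" "\<And>i. v $ i \<in> W"
  shows "(\<Sum>w\<in>W. real (card {i. v $ i = w})) = CARD('n)"
    and "(\<Sum>w\<in>W. real (card {i. v $ i = w}) * w) = (\<Sum>i\<in>UNIV. v $ i)"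
    and "(\<Sum>w\<in>W. real (card {i. v $ i = w}) * (w * w)) = v \<bullet> v"
  using sum_by_values[of W "\<lambda>i. v $ i", OF assms, of "\<lambda>_. 1"]
    sum_by_values[of W "\<lambda>i. v $ i", OF assms, of "\<lambda>w. w"]
    sum_by_values[of W "\<lambda>i. v $ i", OF assms, of "\<lambda>w. w * w"]
  by (simp_all add: inner_self_vec)

lemma ex_bij_eq_comp_if_card_fibres_eq:
  fixes f g :: "'n::finite \<Rightarrow> 'a"
  assumes "\<And>w. card {i. f i = w} = card {i. g i = w}"
  shows "\<exists>\<sigma>. bij \<sigma> \<and> (\<forall>i. f i = g (\<sigma> i))"
proof -
  have "\<exists>h. bij_betw h {i. f i = w} {i. g i = w}" for w
    using assms by (intro finite_same_card_bij) auto
  then obtain H where H: "\<And>w. bij_betw (H w) {i. f i = w} {i. g i = w}"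
    by metis
  define \<sigma> where "\<sigma> i = H (f i) i" for i
  have fg: "g (\<sigma> i) = f i" for i
    using bij_betwE[OF H[of "f i"]] by (auto simp: \<sigma>_def)
  have "inj \<sigma>"
  proof (rule injI)
    fix i j assume "\<sigma> i = \<sigma> j"
    moreover from this have "f i = f j"
      using fg by metis
    ultimately show "i = j"
      using H[of "f i"] by (auto simp: \<sigma>_def bij_betw_def inj_on_def)
  qed
  then have "bij \<sigma>"
    by (simp add: bij_def finite_UNIV_inj_surj)
  with fg show ?thesis
    by auto
qed

lemma ex_permute_coords_eq:
  fixes v w :: "'a^'n"
  assumes "\<And>i. v $ i \<in> W" "\<And>i. w $ i \<in> W"
    and "\<And>x. x \<in> W \<Longrightarrow> card {i. v $ i = x} = card {i. w $ i = x}"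
  shows "\<exists>\<sigma>. bij \<sigma> \<and> v = permute_coords \<sigma> w"
proof -
  have "card {i. v $ i = x} = card {i. w $ i = x}" for x
  proof (cases "x \<in> W")
    case False
    then have "{i. v $ i = x} = {}" "{i. w $ i = x} = {}"
      using assms(1,2) by auto
    then show ?thesis by simp
  qed (use assms(3) in simp)
  then show ?thesis
    using ex_bij_eq_comp_if_card_fibres_eq[of "\<lambda>i. v $ i" "\<lambda>i. w $ i"]
    by (auto simp: vec_eq_iff)
qed

lemma Ints_sq_le_4: "(t::real) \<in> \<int> \<Longrightarrow> t * t \<le> 4 \<Longrightarrow> t \<in> {-2, -1, 0, 1, 2}"
proof (elim Ints_cases)
  fix m :: int assume t: "t = of_int m" "t * t \<le> 4"
  have "\<not> 3 \<le> \<bar>m\<bar>"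
  proof
    assume "3 \<le> \<bar>m\<bar>"
    then have "3 * 3 \<le> \<bar>m\<bar> * \<bar>m\<bar>"
      by (intro mult_mono) auto
    with t show False
      by (simp add: abs_mult[symmetric] flip: of_int_mult of_int_le_iff)
  qed
  then have "m \<in> {-2, -1, 0, 1, 2}"
    by auto
  with t show ?thesis
    by auto
qed

lemma half_Ints_sq_le_9_4:
  "(t::real) - 1/2 \<in> \<int> \<Longrightarrow> t * t \<le> 9/4 \<Longrightarrow> t \<in> {-3/2, -1/2, 1/2, 3/2}"
proof (elim Ints_cases)
  fix m :: int assume t: "t - 1/2 = of_int m" "t * t \<le> 9/4"
  have "\<not> 2 \<le> m" "\<not> m \<le> -3"
  proof
    assume "2 \<le> m"
    with t have "5/2 \<le> t" by linarith
    then have "5/2 * (5/2) \<le> t * t"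
      by (intro mult_mono) auto
    with t show False by simp
  next
    show "\<not> m \<le> -3"
    proof
      assume "m \<le> -3"
      with t have "5/2 \<le> -t" by linarith
      then have "5/2 * (5/2) \<le> (-t) * (-t)"
        by (intro mult_mono) auto
      with t show False by simp
    qed
  qed
  then have "m \<in> {-2, -1, 0, 1}"
    by auto
  with t show ?thesis
    by (auto simp: algebra_simps)
qed

lemma half_Ints_sq_ge: "(t::real) - 1/2 \<in> \<int> \<Longrightarrow> 1/4 \<le> t * t"
proof (elim Ints_cases)
  fix m :: int assume "t - 1/2 = of_int m"
  then have "t * t - 1/4 = of_int (m * (m + 1))"
    by (simp add: algebra_simps)
  moreover have "0 \<le> m * (m + 1)"
    by (cases "0 \<le> m") (auto intro: mult_nonpos_nonpos)
  ultimately show ?thesis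
    by linarith
qed

lemma coord_sq_le_inner_self: "v $ i * v $ i \<le> v \<bullet> (v :: real^'n)"
  unfolding inner_self_vec by (rule member_le_sum) auto

lemma half_Ints_coord_sq_bound:
  fixes v :: "real^8"
  assumes "\<forall>j. v $ j - 1/2 \<in> \<int>"
  shows "v $ i * v $ i + 7/4 \<le> v \<bullet> v"
proof -
  have "v $ i * v $ i + 7 * (1/4) \<le> v $ i * v $ i + (\<Sum>j\<in>UNIV - {i}. v $ j * v $ j)"
    using sum_bounded_below[of "UNIV - {i}" "1/4" "\<lambda>j. v $ j * v $ j"] assms half_Ints_sq_ge
    by simp
  also have "\<dots> = v \<bullet> v"
    by (simp add: inner_self_vec sum.remove)
  finally show ?thesis by simp
qed

(* In each case the multiplicities of the coordinate values are determined by the number of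
   coordinates, their sum and their sum of squares. *)
lemma R_E7_Ints_case:
  fixes \<delta> :: "real^8"
  assumes "\<forall>i. \<delta> $ i \<in> \<int>" and total: "(\<Sum>i\<in>UNIV. \<delta> $ i) = 0" and norm: "\<delta> \<bullet> \<delta> = 2"
  shows "\<exists>\<sigma>. bij \<sigma> \<and> \<delta> = permute_coords \<sigma> (axis 0 1 - axis 1 1)"
proof -
  define c where "c x = card {i. \<delta> $ i = x}" for x
  have c: "card {i. \<delta> $ i = x} = c x" for x
    by (simp add: c_def)
  let ?W = "{-1, 0, 1} :: real set"
  have W: "\<delta> $ i \<in> ?W" for i
    using Ints_sq_le_4[of "\<delta> $ i"] assms(1) coord_sq_le_inner_self[of \<delta> i] norm by auto
  have "real (c (-1)) = 1" "real (c 0) = 6" "real (c 1) = 1"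
    using value_count_moments[of ?W \<delta>, OF _ W] total norm by (simp_all add: c) (linarith+)?
  then show ?thesis
  proof (intro ex_permute_coords_eq[of _ ?W] W)
    show "(axis 0 1 - axis 1 1 :: real^8) $ i \<in> ?W" for i
      by (cases i rule: cases_8) simp_all
  qed (elim insertE emptyE; hypsubst; simp only: c; simp add: card_8)
qed

lemma R_E7_half_Ints_case:
  fixes \<delta> :: "real^8"
  assumes half: "\<forall>i. \<delta> $ i - 1/2 \<in> \<int>" and total: "(\<Sum>i\<in>UNIV. \<delta> $ i) = 0" and norm: "\<delta> \<bullet> \<delta> = 2"
  shows "\<exists>\<sigma>. bij \<sigma> \<and> \<delta> = permute_coords \<sigma> (axis 0 1 + axis 1 1 + axis 2 1 + axis 3 1 - rho)"
proof -
  define c where "c x = card {i. \<delta> $ i = x}" for x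
  have c: "card {i. \<delta> $ i = x} = c x" for x
    by (simp add: c_def)
  let ?W = "{-1/2, 1/2} :: real set"
  have "\<delta> $ i * \<delta> $ i \<le> 1/4" for i
    using half_Ints_coord_sq_bound[OF half, of i] norm by simp
  moreover have "t \<in> {-3/2, -1/2, 1/2, 3/2} \<Longrightarrow> t * t \<le> 1/4 \<Longrightarrow> t \<in> ?W" for t :: real
    by (elim insertE emptyE; hypsubst; simp)
  moreover have "\<delta> $ i \<in> {-3/2, -1/2, 1/2, 3/2}" for i
    using half \<open>\<delta> $ i * \<delta> $ i \<le> 1/4\<close> by (intro half_Ints_sq_le_9_4) simp_all
  ultimately have W: "\<delta> $ i \<in> ?W" for i
    by blast
  have "real (c (-1/2)) = 4" "real (c (1/2)) = 4"
    using value_count_moments[of ?W \<delta>, OF _ W] total by (simp_all add: c) (linarith+)?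
  then show ?thesis
  proof (intro ex_permute_coords_eq[of _ ?W] W)
    show "(axis 0 1 + axis 1 1 + axis 2 1 + axis 3 1 - rho :: real^8) $ i \<in> ?W" for i
      by (cases i rule: cases_8) simp_all
  qed (elim insertE emptyE; hypsubst; simp only: c; simp add: card_8)
qed

lemma R_E7_cases:
  assumes "\<delta> \<in> R_E7"
  obtains \<sigma> where "bij \<sigma>" "\<delta> = permute_coords \<sigma> (axis 0 1 - axis 1 1)"
    | \<sigma> where "bij \<sigma>" "\<delta> = permute_coords \<sigma> (axis 0 1 + axis 1 1 + axis 2 1 + axis 3 1 - rho)"
proof -
  have "(\<Sum>i\<in>UNIV. \<delta> $ i) = 0" "\<delta> \<bullet> \<delta> = 2"
    using assms by (auto simp: R_E7_def R_E8_def inner_rho)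
  moreover have "(\<forall>i. \<delta> $ i \<in> \<int>) \<or> (\<forall>i. \<delta> $ i - 1/2 \<in> \<int>)"
    using assms by (simp add: R_E7_def R_E8_def Lambda_E8_def)
  ultimately show ?thesis
    using R_E7_Ints_case R_E7_half_Ints_case that by blast
qed

lemma norm4_vector_Ints_cases:
  fixes \<mu> :: "real^8"
  assumes "\<forall>i. \<mu> $ i \<in> \<int>" and total: "(\<Sum>i\<in>UNIV. \<mu> $ i) = 2" and norm: "\<mu> \<bullet> \<mu> = 4"
  shows "\<exists>\<sigma>. bij \<sigma> \<and> (\<mu> = permute_coords \<sigma> (2 *\<^sub>R axis 0 1) \<or>
    \<mu> = permute_coords \<sigma> (axis 0 1 + axis 1 1 + axis 2 1 - axis 3 1))"
proof -
  define c where "c x = card {i. \<mu> $ i = x}" for x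
  have c: "card {i. \<mu> $ i = x} = c x" for x
    by (simp add: c_def)
  let ?W = "{-2, -1, 0, 1, 2} :: real set"
  have W: "\<mu> $ i \<in> ?W" for i
    using Ints_sq_le_4[of "\<mu> $ i"] assms(1) coord_sq_le_inner_self[of \<mu> i] norm by auto
  have "real (c (-2) + c (-1) + c 0 + c 1 + c 2) = real 8"
    "real (c 1 + 2 * c 2) = real (2 + 2 * c (-2) + c (-1))"
    "real (4 * c (-2) + c (-1) + c 1 + 4 * c 2) = real 4"
    using value_count_moments[of ?W \<mu>, OF _ W] total norm by (simp_all add: c) (linarith+)?
  then have n: "c (-2) + c (-1) + c 0 + c 1 + c 2 = 8" "c 1 + 2 * c 2 = 2 + 2 * c (-2) + c (-1)"
    "4 * c (-2) + c (-1) + c 1 + 4 * c 2 = 4"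
    by (simp_all only: of_nat_eq_iff)
  then have n4: "c (-2) + c 1 + 3 * c 2 = 3"
    by linarith
  then consider "c 2 = 1" | "c 2 = 0"
    by arith
  then show ?thesis
  proof cases
    case 1
    with n n4 have "c (-2) = 0" "c (-1) = 0" "c 0 = 7" "c 1 = 0"
      by linarith+
    with 1 have "\<exists>\<sigma>. bij \<sigma> \<and> \<mu> = permute_coords \<sigma> (2 *\<^sub>R axis 0 1)"
    proof (intro ex_permute_coords_eq[of _ ?W] W)
      show "(2 *\<^sub>R axis 0 1 :: real^8) $ i \<in> ?W" for i
        by (cases i rule: cases_8) simp_all
    qed (elim insertE emptyE; hypsubst; simp only: c; simp add: card_8)
    then show ?thesis
      by blast
  next
    case 2
    with n(2) n4 have "c (-2) = 0"
      by arith
    with 2 n n4 have "c (-1) = 1" "c 0 = 4" "c 1 = 3"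
      by linarith+
    with 2 \<open>c (-2) = 0\<close> have "\<exists>\<sigma>. bij \<sigma> \<and> \<mu> = permute_coords \<sigma> (axis 0 1 + axis 1 1 + axis 2 1 - axis 3 1)"
    proof (intro ex_permute_coords_eq[of _ ?W] W)
      show "(axis 0 1 + axis 1 1 + axis 2 1 - axis 3 1 :: real^8) $ i \<in> ?W" for i
        by (cases i rule: cases_8) simp_all
    qed (elim insertE emptyE; hypsubst; simp only: c; simp add: card_8)
    then show ?thesis
      by blast
  qed
qed

lemma norm4_vector_half_Ints_cases:
  fixes \<mu> :: "real^8"
  assumes half: "\<forall>i. \<mu> $ i - 1/2 \<in> \<int>" and total: "(\<Sum>i\<in>UNIV. \<mu> $ i) = 2" and norm: "\<mu> \<bullet> \<mu> = 4"
  shows "\<exists>\<sigma>. bij \<sigma> \<and> (\<mu> = permute_coords \<sigma> (rho + axis 0 1 - axis 5 1 - axis 6 1 - axis 7 1) \<or>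
    \<mu> = permute_coords \<sigma> (rho - 2 *\<^sub>R axis 0 1))"
proof -
  define c where "c x = card {i. \<mu> $ i = x}" for x
  have c: "card {i. \<mu> $ i = x} = c x" for x
    by (simp add: c_def)
  let ?W = "{-3/2, -1/2, 1/2, 3/2} :: real set"
  have W: "\<mu> $ i \<in> ?W" for i
    using half_Ints_coord_sq_bound[OF half, of i] half norm by (intro half_Ints_sq_le_9_4) simp_all
  have "real (c (-3/2) + c (-1/2) + c (1/2) + c (3/2)) = real 8"
    "real (c (1/2) + 3 * c (3/2)) = real (4 + 3 * c (-3/2) + c (-1/2))"
    "real (9 * c (-3/2) + c (-1/2) + c (1/2) + 9 * c (3/2)) = real 16"
    using value_count_moments[of ?W \<mu>, OF _ W] total norm by (simp_all add: c) (linarith+)?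
  then have n: "c (-3/2) + c (-1/2) + c (1/2) + c (3/2) = 8"
    "c (1/2) + 3 * c (3/2) = 4 + 3 * c (-3/2) + c (-1/2)"
    "9 * c (-3/2) + c (-1/2) + c (1/2) + 9 * c (3/2) = 16"
    by (simp_all only: of_nat_eq_iff)
  then have "c (-3/2) + c (3/2) = 1"
    by linarith
  then consider "c (3/2) = 1" "c (-3/2) = 0" | "c (3/2) = 0" "c (-3/2) = 1"
    by arith
  then show ?thesis
  proof cases
    case 1
    with n have "c (-1/2) = 3" "c (1/2) = 4"
      by linarith+
    with 1 have "\<exists>\<sigma>. bij \<sigma> \<and> \<mu> = permute_coords \<sigma> (rho + axis 0 1 - axis 5 1 - axis 6 1 - axis 7 1)"
    proof (intro ex_permute_coords_eq[of _ ?W] W)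
      show "(rho + axis 0 1 - axis 5 1 - axis 6 1 - axis 7 1 :: real^8) $ i \<in> ?W" for i
        by (cases i rule: cases_8) simp_all
    qed (elim insertE emptyE; hypsubst; simp only: c; simp add: card_8)
    then show ?thesis
      by blast
  next
    case 2
    with n have "c (-1/2) = 0" "c (1/2) = 7"
      by linarith+
    with 2 have "\<exists>\<sigma>. bij \<sigma> \<and> \<mu> = permute_coords \<sigma> (rho - 2 *\<^sub>R axis 0 1)"
    proof (intro ex_permute_coords_eq[of _ ?W] W)
      show "(rho - 2 *\<^sub>R axis 0 1 :: real^8) $ i \<in> ?W" for i
        by (cases i rule: cases_8) simp_all
    qed (elim insertE emptyE; hypsubst; simp only: c; simp add: card_8)
    then show ?thesis
      by blast
  qed
qed

lemma norm4_vectors_cases: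
  assumes "\<mu> \<in> norm4_vectors"
  obtains \<sigma> where "bij \<sigma>" "\<mu> = permute_coords \<sigma> (2 *\<^sub>R axis 0 1)"
    | \<sigma> where "bij \<sigma>" "\<mu> = permute_coords \<sigma> (axis 0 1 + axis 1 1 + axis 2 1 - axis 3 1)"
    | \<sigma> where "bij \<sigma>" "\<mu> = permute_coords \<sigma> (rho + axis 0 1 - axis 5 1 - axis 6 1 - axis 7 1)"
    | \<sigma> where "bij \<sigma>" "\<mu> = permute_coords \<sigma> (rho - 2 *\<^sub>R axis 0 1)"
proof -
  have "(\<Sum>i\<in>UNIV. \<mu> $ i) = 2" "\<mu> \<bullet> \<mu> = 4"
    using assms by (auto simp: norm4_vectors_def inner_rho)
  moreover have "(\<forall>i. \<mu> $ i \<in> \<int>) \<or> (\<forall>i. \<mu> $ i - 1/2 \<in> \<int>)"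
    using assms by (simp add: norm4_vectors_def Lambda_E8_def)
  ultimately show ?thesis
    using norm4_vector_Ints_cases norm4_vector_half_Ints_cases that by blast
qed

section \<open>Facets\<close>

lemma affine_independent_7I:
  fixes v1 v2 v3 v4 v5 v6 v7 :: "'a::real_vector"
  assumes "distinct [v1, v2, v3, v4, v5, v6, v7]"
    and "\<And>u1 u2 u3 u4 u5 u6 u7. u1 + u2 + u3 + u4 + u5 + u6 + u7 = 0 \<Longrightarrow>
      u1 *\<^sub>R v1 + u2 *\<^sub>R v2 + u3 *\<^sub>R v3 + u4 *\<^sub>R v4 + u5 *\<^sub>R v5 + u6 *\<^sub>R v6 + u7 *\<^sub>R v7 = 0 \<Longrightarrow>
      u1 = 0 \<and> u2 = 0 \<and> u3 = 0 \<and> u4 = 0 \<and> u5 = 0 \<and> u6 = 0 \<and> u7 = 0"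
  shows "\<not> affine_dependent {v1, v2, v3, v4, v5, v6, v7} \<and> card {v1, v2, v3, v4, v5, v6, v7} = 7"
proof
  show "card {v1, v2, v3, v4, v5, v6, v7} = 7"
    using distinct_card[OF assms(1)] by simp
  show "\<not> affine_dependent {v1, v2, v3, v4, v5, v6, v7}"
  proof
    assume "affine_dependent {v1, v2, v3, v4, v5, v6, v7}"
    then obtain U where U: "sum U {v1, v2, v3, v4, v5, v6, v7} = 0"
      "\<exists>v\<in>{v1, v2, v3, v4, v5, v6, v7}. U v \<noteq> 0" "(\<Sum>v\<in>{v1, v2, v3, v4, v5, v6, v7}. U v *\<^sub>R v) = 0"
      by (auto simp: affine_dependent_explicit_finite)
    have "U v1 + U v2 + U v3 + U v4 + U v5 + U v6 + U v7 = 0"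
      using U(1) assms(1) by (simp add: add.assoc)
    moreover have "U v1 *\<^sub>R v1 + U v2 *\<^sub>R v2 + U v3 *\<^sub>R v3 + U v4 *\<^sub>R v4 + U v5 *\<^sub>R v5 + U v6 *\<^sub>R v6
        + U v7 *\<^sub>R v7 = 0"
      using U(3) assms(1) by (simp add: add.assoc)
    ultimately show False
      using assms(2) U(2) by blast
  qed
qed

lemma aff_dim_P1_le: "aff_dim P1 \<le> 7"
proof -
  have "rho \<noteq> 0"
    by (metis rho_inner_rho inner_zero_left zero_neq_numeral)
  have "P1 \<subseteq> {x. rho \<bullet> x = 1}"
    using P1_subset_P1_inequalities by (auto simp: P1_inequalities_def inner_commute)
  then have "aff_dim P1 \<le> aff_dim {x. rho \<bullet> x = 1}"
    by (rule aff_dim_subset)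
  also have "\<dots> = 7"
    using aff_dim_hyperplane[OF \<open>rho \<noteq> 0\<close>, of 1] by simp
  finally show ?thesis .
qed

lemma facet_of_P1I:
  assumes valid: "\<And>x. x \<in> P1 \<Longrightarrow> x \<bullet> c \<le> r"
    and S: "S \<subseteq> {\<alpha> \<in> P1. \<alpha> \<bullet> c = r}" "\<not> affine_dependent S \<and> card S = 7"
    and v: "v \<in> P1" "v \<bullet> c < r"
  shows "{\<alpha> \<in> P1. \<alpha> \<bullet> c = r} facet_of P1"
proof -
  let ?F = "{\<alpha> \<in> P1. \<alpha> \<bullet> c = r}"
  have "?F = P1 \<inter> {x. c \<bullet> x = r}"
    by (auto simp: inner_commute)
  also have "\<dots> face_of P1"
    using valid by (intro face_of_Int_supporting_hyperplane_le convex_P1) (auto simp: inner_commute)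
  finally have face: "?F face_of P1" .
  have "aff_dim S = 6"
    using aff_dim_affine_independent[of S] S(2) by simp
  then have "6 \<le> aff_dim ?F"
    using aff_dim_subset[OF S(1)] by simp
  moreover have "?F \<noteq> {}"
    using S by (metis card.empty subset_empty zero_neq_numeral)
  moreover have "aff_dim ?F < aff_dim P1"
    using v by (intro face_of_aff_dim_lt[OF convex_P1 face]) auto
  ultimately show ?thesis
    using aff_dim_P1_le face unfolding facet_of_def by simp
qed

lemma facet_axis_diff: "{\<alpha> \<in> P1. \<alpha> \<bullet> (axis 0 1 - axis 1 1) = 1} facet_of P1"
proof (rule facet_of_P1I)
  show "x \<bullet> (axis 0 1 - axis 1 1) \<le> 1" if "x \<in> P1" for x
    by (rule P1_inner_R_E7_le[OF that axis_diff_mem_R_E7[of "0::8" 1]]) simp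
  let ?S = "{axis 0 1 + axis 2 1, axis 0 1 + axis 3 1, axis 0 1 + axis 4 1, axis 0 1 + axis 5 1,
    axis 0 1 + axis 6 1, axis 0 1 + axis 7 1, rho - axis 1 1 - axis 2 1} :: (real^8) set"
  show "?S \<subseteq> {\<alpha> \<in> P1. \<alpha> \<bullet> (axis 0 1 - axis 1 1) = 1}"
    by (auto intro!: pair_vector_mem_P1 rho_minus_pair_vector_mem_P1 simp: inner_diff inner_add)
  show "\<not> affine_dependent ?S \<and> card ?S = 7"
    by (rule affine_independent_7I) (auto simp: vec_eq_iff ex_8 all_8)
  show "(axis 1 1 + axis 2 1 :: real^8) \<in> P1"
    "(axis 1 1 + axis 2 1 :: real^8) \<bullet> (axis 0 1 - axis 1 1) < 1"
    by (auto intro!: pair_vector_mem_P1 simp: inner_diff inner_add)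
qed

lemma facet_four_axes_minus_rho: "{\<alpha> \<in> P1. \<alpha> \<bullet> (axis 0 1 + axis 1 1 + axis 2 1 + axis 3 1 - rho) = 1} facet_of P1"
proof (rule facet_of_P1I)
  show "x \<bullet> (axis 0 1 + axis 1 1 + axis 2 1 + axis 3 1 - rho) \<le> 1" if "x \<in> P1" for x
    by (rule P1_inner_R_E7_le[OF that four_axes_minus_rho_mem_R_E7[of "0::8" 1 2 3]]) simp
  let ?S = "{axis 0 1 + axis 1 1, axis 0 1 + axis 2 1, axis 0 1 + axis 3 1, axis 1 1 + axis 2 1,
    rho - axis 4 1 - axis 5 1, rho - axis 4 1 - axis 6 1, rho - axis 5 1 - axis 6 1} :: (real^8) set"
  show "?S \<subseteq> {\<alpha> \<in> P1. \<alpha> \<bullet> (axis 0 1 + axis 1 1 + axis 2 1 + axis 3 1 - rho) = 1}"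
    by (auto intro!: pair_vector_mem_P1 rho_minus_pair_vector_mem_P1 simp: inner_diff inner_add)
  show "\<not> affine_dependent ?S \<and> card ?S = 7"
    by (rule affine_independent_7I) (auto simp: vec_eq_iff ex_8 all_8)
  show "(axis 4 1 + axis 5 1 :: real^8) \<in> P1"
    "(axis 4 1 + axis 5 1 :: real^8) \<bullet> (axis 0 1 + axis 1 1 + axis 2 1 + axis 3 1 - rho) < 1"
    by (auto intro!: pair_vector_mem_P1 simp: inner_diff inner_add)
qed

lemma facet_two_axis: "{\<alpha> \<in> P1. \<alpha> \<bullet> (2 *\<^sub>R axis 0 1) = 2} facet_of P1"
proof (rule facet_of_P1I)
  show "x \<bullet> (2 *\<^sub>R axis 0 1) \<le> 2" if "x \<in> P1" for x
    by (rule P1_inner_norm4_le[OF that two_axis_mem_norm4_vectors])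
  let ?S = "{axis 0 1 + axis 1 1, axis 0 1 + axis 2 1, axis 0 1 + axis 3 1, axis 0 1 + axis 4 1,
    axis 0 1 + axis 5 1, axis 0 1 + axis 6 1, axis 0 1 + axis 7 1} :: (real^8) set"
  show "?S \<subseteq> {\<alpha> \<in> P1. \<alpha> \<bullet> (2 *\<^sub>R axis 0 1) = 2}"
    by (auto intro!: pair_vector_mem_P1 rho_minus_pair_vector_mem_P1 simp: inner_diff inner_add)
  show "\<not> affine_dependent ?S \<and> card ?S = 7"
    by (rule affine_independent_7I) (auto simp: vec_eq_iff ex_8 all_8)
  show "(axis 1 1 + axis 2 1 :: real^8) \<in> P1"
    "(axis 1 1 + axis 2 1 :: real^8) \<bullet> (2 *\<^sub>R axis 0 1) < 2"
    by (auto intro!: pair_vector_mem_P1 simp: inner_diff inner_add)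
qed

lemma facet_three_axes_minus_axis: "{\<alpha> \<in> P1. \<alpha> \<bullet> (axis 0 1 + axis 1 1 + axis 2 1 - axis 3 1) = 2} facet_of P1"
proof (rule facet_of_P1I)
  show "x \<bullet> (axis 0 1 + axis 1 1 + axis 2 1 - axis 3 1) \<le> 2" if "x \<in> P1" for x
    by (rule P1_inner_norm4_le[OF that three_axes_minus_axis_mem_norm4_vectors[of "0::8" 1 2 3]]) simp
  let ?S = "{axis 0 1 + axis 1 1, axis 0 1 + axis 2 1, axis 1 1 + axis 2 1, rho - axis 3 1 - axis 4 1,
    rho - axis 3 1 - axis 5 1, rho - axis 3 1 - axis 6 1, rho - axis 3 1 - axis 7 1} :: (real^8) set"
  show "?S \<subseteq> {\<alpha> \<in> P1. \<alpha> \<bullet> (axis 0 1 + axis 1 1 + axis 2 1 - axis 3 1) = 2}"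
    by (auto intro!: pair_vector_mem_P1 rho_minus_pair_vector_mem_P1 simp: inner_diff inner_add)
  show "\<not> affine_dependent ?S \<and> card ?S = 7"
    by (rule affine_independent_7I) (auto simp: vec_eq_iff ex_8 all_8)
  show "(axis 4 1 + axis 5 1 :: real^8) \<in> P1"
    "(axis 4 1 + axis 5 1 :: real^8) \<bullet> (axis 0 1 + axis 1 1 + axis 2 1 - axis 3 1) < 2"
    by (auto intro!: pair_vector_mem_P1 simp: inner_diff inner_add)
qed

lemma facet_rho_plus_axis_minus_three_axes: "{\<alpha> \<in> P1. \<alpha> \<bullet> (rho + axis 0 1 - axis 5 1 - axis 6 1 - axis 7 1) = 2} facet_of P1"
proof (rule facet_of_P1I)
  show "x \<bullet> (rho + axis 0 1 - axis 5 1 - axis 6 1 - axis 7 1) \<le> 2" if "x \<in> P1" for x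
    by (rule P1_inner_norm4_le[OF that rho_plus_axis_minus_three_axes_mem_norm4_vectors[of "0::8" 5 6 7]]) simp
  let ?S = "{axis 0 1 + axis 1 1, axis 0 1 + axis 2 1, axis 0 1 + axis 3 1, axis 0 1 + axis 4 1,
    rho - axis 5 1 - axis 6 1, rho - axis 5 1 - axis 7 1, rho - axis 6 1 - axis 7 1} :: (real^8) set"
  show "?S \<subseteq> {\<alpha> \<in> P1. \<alpha> \<bullet> (rho + axis 0 1 - axis 5 1 - axis 6 1 - axis 7 1) = 2}"
    by (auto intro!: pair_vector_mem_P1 rho_minus_pair_vector_mem_P1 simp: inner_diff inner_add)
  show "\<not> affine_dependent ?S \<and> card ?S = 7"
    by (rule affine_independent_7I) (auto simp: vec_eq_iff ex_8 all_8)
  show "(axis 5 1 + axis 6 1 :: real^8) \<in> P1"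
    "(axis 5 1 + axis 6 1 :: real^8) \<bullet> (rho + axis 0 1 - axis 5 1 - axis 6 1 - axis 7 1) < 2"
    by (auto intro!: pair_vector_mem_P1 simp: inner_diff inner_add)
qed

lemma facet_rho_minus_two_axis: "{\<alpha> \<in> P1. \<alpha> \<bullet> (rho - 2 *\<^sub>R axis 0 1) = 2} facet_of P1"
proof (rule facet_of_P1I)
  show "x \<bullet> (rho - 2 *\<^sub>R axis 0 1) \<le> 2" if "x \<in> P1" for x
    by (rule P1_inner_norm4_le[OF that rho_minus_two_axis_mem_norm4_vectors])
  let ?S = "{rho - axis 0 1 - axis 1 1, rho - axis 0 1 - axis 2 1, rho - axis 0 1 - axis 3 1, rho - axis 0 1 - axis 4 1,
    rho - axis 0 1 - axis 5 1, rho - axis 0 1 - axis 6 1, rho - axis 0 1 - axis 7 1} :: (real^8) set"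
  show "?S \<subseteq> {\<alpha> \<in> P1. \<alpha> \<bullet> (rho - 2 *\<^sub>R axis 0 1) = 2}"
    by (auto intro!: pair_vector_mem_P1 rho_minus_pair_vector_mem_P1 simp: inner_diff inner_add)
  show "\<not> affine_dependent ?S \<and> card ?S = 7"
    by (rule affine_independent_7I) (auto simp: vec_eq_iff ex_8 all_8)
  show "(axis 1 1 + axis 2 1 :: real^8) \<in> P1"
    "(axis 1 1 + axis 2 1 :: real^8) \<bullet> (rho - 2 *\<^sub>R axis 0 1) < 2"
    by (auto intro!: pair_vector_mem_P1 simp: inner_diff inner_add)
qed

theorem proposition5p8:
  shows "P1 = {\<alpha>. \<alpha> \<bullet> rho = 1 \<and> (\<forall>\<delta>\<in>R_E7. \<alpha> \<bullet> \<delta> \<le> 1) \<and>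
                (\<forall>\<mu>\<in>Lambda_E8. \<mu> \<bullet> rho = 1 \<and> \<mu> \<bullet> \<mu> = 4 \<longrightarrow> \<alpha> \<bullet> \<mu> \<le> 2)} \<and>
         (\<forall>\<delta>\<in>R_E7. {\<alpha> \<in> P1. \<alpha> \<bullet> \<delta> = 1} facet_of P1) \<and>
         (\<forall>\<mu>\<in>Lambda_E8. \<mu> \<bullet> rho = 1 \<and> \<mu> \<bullet> \<mu> = 4 \<longrightarrow> {\<alpha> \<in> P1. \<alpha> \<bullet> \<mu> = 2} facet_of P1)"
proof (intro conjI ballI impI)
  have "P1 = P1_inequalities"
    using P1_subset_P1_inequalities P1_inequalities_subset_P1 by blast
  then show "P1 = {\<alpha>. \<alpha> \<bullet> rho = 1 \<and> (\<forall>\<delta>\<in>R_E7. \<alpha> \<bullet> \<delta> \<le> 1) \<and>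
                (\<forall>\<mu>\<in>Lambda_E8. \<mu> \<bullet> rho = 1 \<and> \<mu> \<bullet> \<mu> = 4 \<longrightarrow> \<alpha> \<bullet> \<mu> \<le> 2)}"
    by (auto simp: P1_inequalities_def norm4_vectors_def)
next
  fix \<delta> assume "\<delta> \<in> R_E7"
  then show "{\<alpha> \<in> P1. \<alpha> \<bullet> \<delta> = 1} facet_of P1"
    by (cases rule: R_E7_cases)
      (blast intro: facet_of_P1_permute_coords facet_axis_diff facet_four_axes_minus_rho)+
next
  fix \<mu> assume "\<mu> \<in> Lambda_E8" "\<mu> \<bullet> rho = 1 \<and> \<mu> \<bullet> \<mu> = 4"
  then have "\<mu> \<in> norm4_vectors"
    by (simp add: norm4_vectors_def)
  then show "{\<alpha> \<in> P1. \<alpha> \<bullet> \<mu> = 2} facet_of P1"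
    by (cases rule: norm4_vectors_cases)
      (blast intro: facet_of_P1_permute_coords facet_two_axis facet_three_axes_minus_axis
        facet_rho_plus_axis_minus_three_axes facet_rho_minus_two_axis)+
qed

end
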